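(* Let $\mathcal{D}_{\text{SEQ}}$ be a temporal sequence database and let $(E_i,E_j)$ be the pair of events occurring in a 2-event temporal pattern $P$. Then $\textit{conf}(P) \le \textit{conf}(E_i,E_j)$.
   Context: A temporal event is $E=(\omega,T)$ with $\omega$ a symbol and $T$ a set of time intervals; an instance is $e=(\omega,[t_s,t_e])$ with $[t_s,t_e]\in T$. A temporal sequence is a list of event instances ordered by start time; $\mathcal{D}_{\text{SEQ}}$ is a finite collection of temporal sequences. A temporal pattern is a list of triples $(r_{ij},E_i,E_j)$ with $r_{ij}\in\{\text{Follows},\text{Contains},\text{Overlaps}\}$ (fixed binary conditions on instance intervals). A sequence $S$ supports $P$ iff $|S|\ge2$ and for every triple $(r_{ij},E_i,E_j)\in P$ there are instances of $E_i,E_j$ in $S$ between which $r_{ij}$ holds. $\textit{supp}(E)$ (resp. $\textit{supp}(E_i,E_j)$) is the number of sequences containing at least one instance of $E$ (resp. of both $E_i$ and $E_j$); $\textit{supp}(P)$ is the number of sequences supporting $P$. Confidences: $\textit{conf}(E_i,E_j)=\textit{supp}(E_i,E_j)/\max\{\textit{supp}(E_i),\textit{supp}(E_j)\}$ and $\textit{conf}(P)=\textit{supp}(P)/\max_{E_k\in P}\textit{supp}(E_k)$. *)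

theory Defs
  imports Main "HOL.Real"
begin

type_synonym interval = "real \<times> real"
type_synonym 's event = "'s \<times> interval set"
type_synonym 's inst = "'s \<times> interval"
type_synonym 's tseq = "'s inst list"

datatype trel = Follows | Contains | Overlaps

type_synonym 's tpattern = "(trel \<times> 's event \<times> 's event) list"

definition temporal_sequence :: "'s tseq \<Rightarrow> bool" where
  "temporal_sequence S \<longleftrightarrow>
     (\<forall>e\<in>set S. fst (snd e) \<le> snd (snd e)) \<and> sorted (map (\<lambda>e. fst (snd e)) S)"

definition is_instance :: "'s inst \<Rightarrow> 's event \<Rightarrow> bool" where
  "is_instance e E \<longleftrightarrow> fst e = fst E \<and> snd e \<in> snd E"

definition occurs_in :: "'s event \<Rightarrow> 's tseq \<Rightarrow> bool" where
  "occurs_in E S \<longleftrightarrow> (\<exists>e\<in>set S. is_instance e E)"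

(* holds r I J : the (fixed) condition of relation r between intervals I and J *)
definition supports ::
  "(trel \<Rightarrow> interval \<Rightarrow> interval \<Rightarrow> bool) \<Rightarrow> 's tseq \<Rightarrow> 's tpattern \<Rightarrow> bool" where
  "supports holds S P \<longleftrightarrow> length S \<ge> 2 \<and>
     (\<forall>(r, Ei, Ej)\<in>set P. \<exists>ei\<in>set S. \<exists>ej\<in>set S.
         is_instance ei Ei \<and> is_instance ej Ej \<and> holds r (snd ei) (snd ej))"

(* database = finite collection of sequences, as a list (multiplicities counted) *)
definition supp_ev :: "'s tseq list \<Rightarrow> 's event \<Rightarrow> nat" where
  "supp_ev D E = length (filter (occurs_in E) D)"

definition supp_pair :: "'s tseq list \<Rightarrow> 's event \<Rightarrow> 's event \<Rightarrow> nat" where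
  "supp_pair D Ei Ej = length (filter (\<lambda>S. occurs_in Ei S \<and> occurs_in Ej S) D)"

definition supp_pat ::
  "(trel \<Rightarrow> interval \<Rightarrow> interval \<Rightarrow> bool) \<Rightarrow> 's tseq list \<Rightarrow> 's tpattern \<Rightarrow> nat" where
  "supp_pat holds D P = length (filter (\<lambda>S. supports holds S P) D)"

definition conf_pair :: "'s tseq list \<Rightarrow> 's event \<Rightarrow> 's event \<Rightarrow> real" where
  "conf_pair D Ei Ej = real (supp_pair D Ei Ej) / real (max (supp_ev D Ei) (supp_ev D Ej))"

definition pattern_events :: "'s tpattern \<Rightarrow> 's event set" where
  "pattern_events P = (\<Union>(r, Ei, Ej)\<in>set P. {Ei, Ej})"

definition conf_pat ::
  "(trel \<Rightarrow> interval \<Rightarrow> interval \<Rightarrow> bool) \<Rightarrow> 's tseq list \<Rightarrow> 's tpattern \<Rightarrow> real" where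
  "conf_pat holds D P = real (supp_pat holds D P) / real (Max (supp_ev D ` pattern_events P))"

end

theory Submission
  imports Defs
begin

(* A sequence supporting P contains both events of each triple of P, so supp(P) is at most
   supp(E_i, E_j); for a 2-event pattern the two confidences share the denominator
   max(supp E_i, supp E_j). *)

lemma length_filter_mono:
  assumes "\<And>x. P x \<Longrightarrow> Q x"
  shows "length (filter P xs) \<le> length (filter Q xs)"
  using assms by (induction xs) auto

lemma supports_imp_occurs_in:
  assumes "supports holds S P" and "(r, Ei, Ej) \<in> set P"
  shows "occurs_in Ei S \<and> occurs_in Ej S"
  using assms unfolding supports_def occurs_in_def by fast

lemma supp_pat_le_supp_pair:
  assumes "(r, Ei, Ej) \<in> set P"
  shows "supp_pat holds D P \<le> supp_pair D Ei Ej"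
  unfolding supp_pat_def supp_pair_def
  using supports_imp_occurs_in[OF _ assms] by (rule length_filter_mono)

lemma Max_supp_ev_single_pattern:
  "Max (supp_ev D ` pattern_events [(r, Ei, Ej)]) = max (supp_ev D Ei) (supp_ev D Ej)"
  by (simp add: pattern_events_def max_def)

theorem lemma3:
  fixes holds :: "trel \<Rightarrow> interval \<Rightarrow> interval \<Rightarrow> bool"
    and D :: "'s tseq list" and P :: "'s tpattern"
    and r :: trel and Ei Ej :: "'s event"
  assumes "\<forall>S\<in>set D. temporal_sequence S"
    and "P = [(r, Ei, Ej)]"
  shows "conf_pat holds D P \<le> conf_pair D Ei Ej"
proof -
  have "supp_pat holds D P \<le> supp_pair D Ei Ej"
    using assms(2) by (simp add: supp_pat_le_supp_pair)
  then show ?thesis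
    unfolding conf_pat_def conf_pair_def assms(2) Max_supp_ev_single_pattern
    by (simp add: divide_right_mono)
qed

end
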